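(* Let $G$ be a group and $N$ a normal subgroup of $G$. If $S=\bigoplus_{g\in G}S_g$ is a nearly epsilon-strongly $G$-graded ring, then the induced $G/N$-grading $\{S_C\}_{C\in G/N}$ is nearly epsilon-strong.
   Context: Rings are associative, not necessarily unital; $AB$ denotes finite sums of products. A $G$-grading: $S=\bigoplus_gS_g$, $S_gS_h\subseteq S_{gh}$. A grading $\{T_h\}_{h\in H}$ is nearly epsilon-strong if $T_hT_{h^{-1}}T_h=T_h$ for all $h$ and each ring $T_hT_{h^{-1}}$ is $s$-unital (every $x$ in a ring $R$ satisfies $x\in xR\cap Rx$); equivalently, for each $h$ and $t\in T_h$ there are $\epsilon\in T_hT_{h^{-1}}$, $\epsilon'\in T_{h^{-1}}T_h$ with $\epsilon t=t=t\epsilon'$. Induced grading: $S_C=\bigoplus_{g\in C}S_g$. *)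

theory Defs
  imports "HOL-Algebra.Coset"
begin

text \<open>Rings are the type class ring (associative, not necessarily unital).
  The graded ring S is the whole carrier type 'a; a grading over a group G
  is a family of subsets indexed by carrier G.\<close>

definition ring_prod :: "'a::ring set \<Rightarrow> 'a set \<Rightarrow> 'a set" where
  "ring_prod A B = {(\<Sum>i\<in>I. a i * b i) | I a b. finite (I::nat set) \<and> (\<forall>i\<in>I. a i \<in> A \<and> b i \<in> B)}"

definition additive_subgroup :: "'a::ring set \<Rightarrow> bool" where
  "additive_subgroup A \<longleftrightarrow> 0 \<in> A \<and> (\<forall>x\<in>A. \<forall>y\<in>A. x + y \<in> A \<and> - x \<in> A)"

definition s_unital :: "'a::ring set \<Rightarrow> bool" where
  "s_unital R \<longleftrightarrow> (\<forall>x\<in>R. x \<in> {x * r | r. r \<in> R} \<and> x \<in> {r * x | r. r \<in> R})"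

definition graded_ring :: "('g, 'b) monoid_scheme \<Rightarrow> ('g \<Rightarrow> 'a::ring set) \<Rightarrow> bool" where
  "graded_ring G S \<longleftrightarrow>
     (\<forall>g\<in>carrier G. additive_subgroup (S g)) \<and>
     (\<forall>g\<in>carrier G. \<forall>h\<in>carrier G. ring_prod (S g) (S h) \<subseteq> S (g \<otimes>\<^bsub>G\<^esub> h)) \<and>
     (\<forall>x::'a. \<exists>!f. (\<forall>g. g \<notin> carrier G \<longrightarrow> f g = 0) \<and> (\<forall>g\<in>carrier G. f g \<in> S g)
                 \<and> finite {g. f g \<noteq> 0} \<and> x = (\<Sum>g\<in>{g. f g \<noteq> 0}. f g))"

definition nearly_epsilon_strong :: "('g, 'b) monoid_scheme \<Rightarrow> ('g \<Rightarrow> 'a::ring set) \<Rightarrow> bool" where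
  "nearly_epsilon_strong G S \<longleftrightarrow> graded_ring G S \<and>
     (\<forall>h\<in>carrier G. ring_prod (ring_prod (S h) (S (inv\<^bsub>G\<^esub> h))) (S h) = S h
                    \<and> s_unital (ring_prod (S h) (S (inv\<^bsub>G\<^esub> h))))"

definition induced_grading :: "('g \<Rightarrow> 'a::ring set) \<Rightarrow> 'g set \<Rightarrow> 'a set" where
  "induced_grading S C = {(\<Sum>g\<in>F. f g) | F f. finite F \<and> F \<subseteq> C \<and> (\<forall>g\<in>F. f g \<in> S g)}"

end

theory Submission
  imports Defs
begin

(* A grading is nearly epsilon-strong iff every homogeneous s in S_h has local units
   e in S_h S_(h^-1) and e' in S_(h^-1) S_h with e s = s = s e'.  Both directions pass between
   local units of single elements and a common local unit of a finite family by Tominaga's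
   argument: if u fixes some elements and v fixes what u leaves of another, then u + v - v u
   fixes all of them.

   For the induced grading, an element of S_C is a finite sum of homogeneous s_g with g in C.
   Each s_g has local units in S_g S_(g^-1), which lies both in S_C S_(C^-1) and in S_1, so
   Tominaga's argument yields one unit for the whole sum.  That the S_C form a grading at all
   follows by collecting the homogeneous components of an element along the cosets of N. *)

lemma additive_subgroup_zero: "additive_subgroup A \<Longrightarrow> 0 \<in> A"
  by (simp add: additive_subgroup_def)

lemma additive_subgroup_add: "additive_subgroup A \<Longrightarrow> x \<in> A \<Longrightarrow> y \<in> A \<Longrightarrow> x + y \<in> A"
  by (simp add: additive_subgroup_def)

lemma additive_subgroup_uminus: "additive_subgroup A \<Longrightarrow> x \<in> A \<Longrightarrow> - x \<in> A"
  by (simp add: additive_subgroup_def)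

lemma additive_subgroup_diff: "additive_subgroup A \<Longrightarrow> x \<in> A \<Longrightarrow> y \<in> A \<Longrightarrow> x - y \<in> A"
  by (metis additive_subgroup_add additive_subgroup_uminus diff_conv_add_uminus)

lemma additive_subgroup_sum:
  assumes "additive_subgroup A" and "\<And>i. i \<in> I \<Longrightarrow> f i \<in> A"
  shows "sum f I \<in> A"
proof (cases "finite I")
  case True
  then show ?thesis using assms(2)
    by induction (auto intro: additive_subgroup_add[OF assms(1)] additive_subgroup_zero[OF assms(1)])
qed (simp add: additive_subgroup_zero[OF assms(1)])

lemma additive_subgroup_Int:
  "additive_subgroup A \<Longrightarrow> additive_subgroup B \<Longrightarrow> additive_subgroup (A \<inter> B)"
  unfolding additive_subgroup_def by blast

lemma s_unital_iff: "s_unital R \<longleftrightarrow> (\<forall>x\<in>R. (\<exists>r\<in>R. r * x = x) \<and> (\<exists>r\<in>R. x * r = x))"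
  unfolding s_unital_def by (auto, metis+)

lemma mult_mem_ring_prod: "a \<in> A \<Longrightarrow> b \<in> B \<Longrightarrow> a * b \<in> ring_prod A B"
  unfolding ring_prod_def by (intro CollectI exI[of _ "{0::nat}"] exI[of _ "\<lambda>_. a"] exI[of _ "\<lambda>_. b"]) simp

lemma ring_prod_mono: "A \<subseteq> A' \<Longrightarrow> B \<subseteq> B' \<Longrightarrow> ring_prod A B \<subseteq> ring_prod A' B'"
  unfolding ring_prod_def by blast

lemma ring_prod_subset:
  assumes "additive_subgroup T" and "\<And>a b. a \<in> A \<Longrightarrow> b \<in> B \<Longrightarrow> a * b \<in> T"
  shows "ring_prod A B \<subseteq> T"
  using assms unfolding ring_prod_def by (auto intro!: additive_subgroup_sum)

lemma mult_left_mem_ring_prod: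
  assumes "x \<in> ring_prod A B" and "\<And>a. a \<in> A \<Longrightarrow> u * a \<in> A"
  shows "u * x \<in> ring_prod A B"
proof -
  obtain I a b where "finite (I::nat set)" "\<forall>i\<in>I. a i \<in> A \<and> b i \<in> B" "x = (\<Sum>i\<in>I. a i * b i)"
    using assms(1) unfolding ring_prod_def by blast
  then show ?thesis unfolding ring_prod_def using assms(2)
    by (intro CollectI exI[of _ I] exI[of _ "\<lambda>i. u * a i"] exI[of _ b])
      (simp add: sum_distrib_left mult.assoc)
qed

lemma mult_right_mem_ring_prod:
  assumes "x \<in> ring_prod A B" and "\<And>b. b \<in> B \<Longrightarrow> b * u \<in> B"
  shows "x * u \<in> ring_prod A B"
proof -
  obtain I a b where "finite (I::nat set)" "\<forall>i\<in>I. a i \<in> A \<and> b i \<in> B" "x = (\<Sum>i\<in>I. a i * b i)"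
    using assms(1) unfolding ring_prod_def by blast
  then show ?thesis unfolding ring_prod_def using assms(2)
    by (intro CollectI exI[of _ I] exI[of _ a] exI[of _ "\<lambda>i. b i * u"])
      (simp add: sum_distrib_right mult.assoc)
qed

lemma additive_subgroup_ring_prod:
  assumes B: "additive_subgroup B"
  shows "additive_subgroup (ring_prod A B)"
  unfolding additive_subgroup_def
proof (intro conjI ballI)
  show "0 \<in> ring_prod A B"
    unfolding ring_prod_def by (intro CollectI exI[of _ "{}::nat set"]) simp
next
  fix x assume "x \<in> ring_prod A B"
  then obtain I a b where "finite (I::nat set)" "\<forall>i\<in>I. a i \<in> A \<and> b i \<in> B" "x = (\<Sum>i\<in>I. a i * b i)"
    unfolding ring_prod_def by blast
  then show "- x \<in> ring_prod A B" unfolding ring_prod_def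
    by (intro CollectI exI[of _ I] exI[of _ a] exI[of _ "\<lambda>i. - b i"])
      (simp add: sum_negf additive_subgroup_uminus[OF B])
next
  fix x y assume "x \<in> ring_prod A B" "y \<in> ring_prod A B"
  then obtain I a b J c d
    where x: "finite (I::nat set)" "\<forall>i\<in>I. a i \<in> A \<and> b i \<in> B" "x = (\<Sum>i\<in>I. a i * b i)"
      and y: "finite (J::nat set)" "\<forall>j\<in>J. c j \<in> A \<and> d j \<in> B" "y = (\<Sum>j\<in>J. c j * d j)"
    unfolding ring_prod_def by blast
  define a' where "a' i = (if even i then a (i div 2) else c (i div 2))" for i :: nat
  define b' where "b' i = (if even i then b (i div 2) else d (i div 2))" for i :: nat
  have "(\<Sum>i\<in>(\<lambda>i. 2 * i) ` I \<union> (\<lambda>j. 2 * j + 1) ` J. a' i * b' i)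
      = (\<Sum>i\<in>(\<lambda>i. 2 * i) ` I. a' i * b' i) + (\<Sum>i\<in>(\<lambda>j. 2 * j + 1) ` J. a' i * b' i)"
    using x(1) y(1) by (intro sum.union_disjoint) (auto, presburger)
  also have "\<dots> = x + y"
    by (simp add: sum.reindex inj_on_def x(3) y(3) a'_def b'_def)
  finally show "x + y \<in> ring_prod A B" unfolding ring_prod_def using x(1,2) y(1,2)
    by (intro CollectI exI[of _ "(\<lambda>i. 2 * i) ` I \<union> (\<lambda>j. 2 * j + 1) ` J"] exI[of _ a'] exI[of _ b'])
      (auto simp: a'_def b'_def)
qed

lemma ring_prod_assoc_subset:
  assumes "additive_subgroup B" and "additive_subgroup C"
  shows "ring_prod (ring_prod A B) C \<subseteq> ring_prod A (ring_prod B C)"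
proof (rule ring_prod_subset)
  show "additive_subgroup (ring_prod A (ring_prod B C))"
    by (intro additive_subgroup_ring_prod assms)
  fix x c assume "x \<in> ring_prod A B" and c: "c \<in> C"
  have "ring_prod A B \<subseteq> {y. y * c \<in> ring_prod A (ring_prod B C)}"
  proof (rule ring_prod_subset)
    show "additive_subgroup {y. y * c \<in> ring_prod A (ring_prod B C)}"
      using \<open>additive_subgroup (ring_prod A (ring_prod B C))\<close>
      by (simp add: additive_subgroup_def distrib_right)
    show "a * b \<in> {y. y * c \<in> ring_prod A (ring_prod B C)}" if "a \<in> A" "b \<in> B" for a b
      using that c by (simp add: mult.assoc mult_mem_ring_prod)
  qed
  then show "x * c \<in> ring_prod A (ring_prod B C)" using \<open>x \<in> ring_prod A B\<close> by blast
qed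

lemma common_left_unit:
  fixes U M :: "'a::ring set"
  assumes U: "additive_subgroup U" "\<And>u v. u \<in> U \<Longrightarrow> v \<in> U \<Longrightarrow> u * v \<in> U"
    and M: "\<And>u x. u \<in> U \<Longrightarrow> x \<in> M \<Longrightarrow> x - u * x \<in> M"
    and unit: "\<And>x. x \<in> M \<Longrightarrow> \<exists>u\<in>U. u * x = x"
    and X: "finite X" "X \<subseteq> M"
  shows "\<exists>u\<in>U. \<forall>x\<in>X. u * x = x"
  using X
proof (induction X rule: finite_induct)
  case empty
  then show ?case using additive_subgroup_zero[OF U(1)] by blast
next
  case (insert y X)
  then obtain u where u: "u \<in> U" "\<forall>x\<in>X. u * x = x" by blast
  obtain v where v: "v \<in> U" "v * (y - u * y) = y - u * y"
    using unit M[OF u(1)] insert.prems by blast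
  \<comment> \<open>Tominaga's trick: \<open>1 - w = (1 - v) (1 - u)\<close> kills both \<open>y\<close> and every \<open>x \<in> X\<close>\<close>
  define w where "w = u + v - v * u"
  have "w \<in> U"
    unfolding w_def using u(1) v(1) U by (intro additive_subgroup_diff additive_subgroup_add) auto
  moreover have "w * x = x" if "x \<in> insert y X" for x
  proof -
    have "w * x = u * x + v * (x - u * x)"
      by (simp add: w_def algebra_simps)
    then show ?thesis using that u(2) v(2) by auto
  qed
  ultimately show ?case by blast
qed

lemma common_right_unit:
  fixes U M :: "'a::ring set"
  assumes U: "additive_subgroup U" "\<And>u v. u \<in> U \<Longrightarrow> v \<in> U \<Longrightarrow> u * v \<in> U"
    and M: "\<And>u x. u \<in> U \<Longrightarrow> x \<in> M \<Longrightarrow> x - x * u \<in> M"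
    and unit: "\<And>x. x \<in> M \<Longrightarrow> \<exists>u\<in>U. x * u = x"
    and X: "finite X" "X \<subseteq> M"
  shows "\<exists>u\<in>U. \<forall>x\<in>X. x * u = x"
  using X
proof (induction X rule: finite_induct)
  case empty
  then show ?case using additive_subgroup_zero[OF U(1)] by blast
next
  case (insert y X)
  then obtain u where u: "u \<in> U" "\<forall>x\<in>X. x * u = x" by blast
  obtain v where v: "v \<in> U" "(y - y * u) * v = y - y * u"
    using unit M[OF u(1)] insert.prems by blast
  define w where "w = u + v - u * v"
  have "w \<in> U"
    unfolding w_def using u(1) v(1) U by (intro additive_subgroup_diff additive_subgroup_add) auto
  moreover have "x * w = x" if "x \<in> insert y X" for x
  proof -
    have "x * w = x * u + (x - x * u) * v"
      by (simp add: w_def algebra_simps)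
    then show ?thesis using that u(2) v(2) by auto
  qed
  ultimately show ?case by blast
qed

lemma left_unit_ring_prod:
  fixes U M :: "'a::ring set"
  assumes U: "additive_subgroup U" "\<And>u v. u \<in> U \<Longrightarrow> v \<in> U \<Longrightarrow> u * v \<in> U"
    and M: "\<And>u x. u \<in> U \<Longrightarrow> x \<in> M \<Longrightarrow> x - u * x \<in> M"
    and unit: "\<And>x. x \<in> M \<Longrightarrow> \<exists>u\<in>U. u * x = x"
    and x: "x \<in> ring_prod M B"
  shows "\<exists>u\<in>U. u * x = x"
proof -
  obtain I a b where I: "finite (I::nat set)" "\<forall>i\<in>I. a i \<in> M \<and> b i \<in> B" "x = (\<Sum>i\<in>I. a i * b i)"
    using x unfolding ring_prod_def by blast
  obtain u where "u \<in> U" "\<forall>y\<in>a ` I. u * y = y"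
    using common_left_unit[OF U M unit, of "a ` I"] I(1,2) by blast
  moreover have "u * x = (\<Sum>i\<in>I. (u * a i) * b i)"
    using I(3) by (simp add: sum_distrib_left mult.assoc)
  ultimately show ?thesis using I(3) by auto
qed

lemma right_unit_ring_prod:
  fixes U M :: "'a::ring set"
  assumes U: "additive_subgroup U" "\<And>u v. u \<in> U \<Longrightarrow> v \<in> U \<Longrightarrow> u * v \<in> U"
    and M: "\<And>u x. u \<in> U \<Longrightarrow> x \<in> M \<Longrightarrow> x - x * u \<in> M"
    and unit: "\<And>x. x \<in> M \<Longrightarrow> \<exists>u\<in>U. x * u = x"
    and x: "x \<in> ring_prod A M"
  shows "\<exists>u\<in>U. x * u = x"
proof -
  obtain I a b where I: "finite (I::nat set)" "\<forall>i\<in>I. a i \<in> A \<and> b i \<in> M" "x = (\<Sum>i\<in>I. a i * b i)"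
    using x unfolding ring_prod_def by blast
  obtain u where "u \<in> U" "\<forall>y\<in>b ` I. y * u = y"
    using common_right_unit[OF U M unit, of "b ` I"] I(1,2) by blast
  moreover have "x * u = (\<Sum>i\<in>I. a i * (b i * u))"
    using I(3) by (simp add: sum_distrib_right mult.assoc)
  ultimately show ?thesis using I(3) by auto
qed

lemma (in group) FactGroup_carrier_subset:
  assumes "subgroup N G" "C \<in> carrier (G Mod N)"
  shows "C \<subseteq> carrier G"
  using assms r_coset_subset_G[OF subgroup.subset[OF assms(1)]] by (auto simp: carrier_FactGroup)

lemma (in group) r_coset_mem_FactGroup: "g \<in> carrier G \<Longrightarrow> N #> g \<in> carrier (G Mod N)"
  by (simp add: carrier_FactGroup)

lemma (in group) FactGroup_repr:
  assumes "subgroup N G" "C \<in> carrier (G Mod N)" "g \<in> C"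
  shows "N #> g = C"
  using assms repr_independence[OF _ _ assms(1)] by (auto simp: carrier_FactGroup)

lemma (in group) set_inv_subset_carrier: "C \<subseteq> carrier G \<Longrightarrow> set_inv C \<subseteq> carrier G"
  by (auto simp: SET_INV_def)

lemma (in monoid) inv_mem_set_inv: "h \<in> C \<Longrightarrow> inv h \<in> set_inv C"
  by (auto simp: SET_INV_def)

definition decomposition :: "('g, 'b) monoid_scheme \<Rightarrow> ('g \<Rightarrow> 'a::ring set) \<Rightarrow> 'a \<Rightarrow> ('g \<Rightarrow> 'a) \<Rightarrow> bool"
  where "decomposition G S x f \<longleftrightarrow>
    (\<forall>g. g \<notin> carrier G \<longrightarrow> f g = 0) \<and> (\<forall>g\<in>carrier G. f g \<in> S g) \<and>
    finite {g. f g \<noteq> 0} \<and> x = (\<Sum>g | f g \<noteq> 0. f g)"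

lemma graded_ring_iff_decomposition:
  "graded_ring G S \<longleftrightarrow>
    (\<forall>g\<in>carrier G. additive_subgroup (S g)) \<and>
    (\<forall>g\<in>carrier G. \<forall>h\<in>carrier G. ring_prod (S g) (S h) \<subseteq> S (g \<otimes>\<^bsub>G\<^esub> h)) \<and>
    (\<forall>x. \<exists>!f. decomposition G S x f)"
  unfolding graded_ring_def decomposition_def ..

definition homogeneous_local_units :: "('g, 'b) monoid_scheme \<Rightarrow> ('g \<Rightarrow> 'a::ring set) \<Rightarrow> bool"
  where "homogeneous_local_units G S \<longleftrightarrow>
    (\<forall>h\<in>carrier G. \<forall>s\<in>S h.
      (\<exists>e\<in>ring_prod (S h) (S (inv\<^bsub>G\<^esub> h)). e * s = s) \<and>
      (\<exists>e\<in>ring_prod (S (inv\<^bsub>G\<^esub> h)) (S h). s * e = s))"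

definition coset_sum :: "('g, 'b) monoid_scheme \<Rightarrow> 'g set \<Rightarrow> ('g \<Rightarrow> 'a::comm_monoid_add) \<Rightarrow> 'g set \<Rightarrow> 'a"
  where "coset_sum G N f C = (\<Sum>g | f g \<noteq> 0 \<and> N #>\<^bsub>G\<^esub> g = C. f g)"

lemma coset_sum_support:
  "{C. coset_sum G N f C \<noteq> 0} \<subseteq> (\<lambda>g. N #>\<^bsub>G\<^esub> g) ` {g. f g \<noteq> 0}"
proof
  fix C assume "C \<in> {C. coset_sum G N f C \<noteq> 0}"
  then have "{g. f g \<noteq> 0 \<and> N #>\<^bsub>G\<^esub> g = C} \<noteq> {}"
    unfolding coset_sum_def by force
  then show "C \<in> (\<lambda>g. N #>\<^bsub>G\<^esub> g) ` {g. f g \<noteq> 0}" by blast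
qed

lemma sum_coset_sum:
  assumes "finite {g. f g \<noteq> 0}"
  shows "(\<Sum>C | coset_sum G N f C \<noteq> 0. coset_sum G N f C) = (\<Sum>g | f g \<noteq> 0. f g)"
proof -
  let ?Q = "(\<lambda>g. N #>\<^bsub>G\<^esub> g) ` {g. f g \<noteq> 0}"
  have "(\<Sum>C | coset_sum G N f C \<noteq> 0. coset_sum G N f C) = (\<Sum>C\<in>?Q. coset_sum G N f C)"
    using assms coset_sum_support[where G = G and N = N and f = f] by (intro sum.mono_neutral_left) auto
  also have "\<dots> = (\<Sum>g | f g \<noteq> 0. f g)"
    using sum.group[of "{g. f g \<noteq> 0}" ?Q "\<lambda>g. N #>\<^bsub>G\<^esub> g" f] assms
    by (simp add: coset_sum_def)
  finally show ?thesis .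
qed

locale group_grading = group G for G :: "('g, 'b) monoid_scheme" (structure) +
  fixes S :: "'g \<Rightarrow> 'a::ring set"
  assumes graded_ring: "graded_ring G S"
begin

lemma additive_subgroup_component: "g \<in> carrier G \<Longrightarrow> additive_subgroup (S g)"
  using graded_ring by (simp add: graded_ring_def)

lemma ring_prod_components:
  "g \<in> carrier G \<Longrightarrow> h \<in> carrier G \<Longrightarrow> ring_prod (S g) (S h) \<subseteq> S (g \<otimes> h)"
  using graded_ring by (simp add: graded_ring_def)

lemma mult_components:
  "g \<in> carrier G \<Longrightarrow> h \<in> carrier G \<Longrightarrow> a \<in> S g \<Longrightarrow> b \<in> S h \<Longrightarrow> a * b \<in> S (g \<otimes> h)"
  using ring_prod_components mult_mem_ring_prod by blast

lemma mult_one_component: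
  assumes "h \<in> carrier G" "u \<in> S \<one>" "x \<in> S h"
  shows "u * x \<in> S h" and "x * u \<in> S h"
  using mult_components[of \<one> h u x] mult_components[of h \<one> x u] assms by auto

lemma ex1_decomposition: "\<exists>!f. decomposition G S x f"
  using graded_ring by (simp add: graded_ring_iff_decomposition)

lemma ring_prod_inv_subset_one: "h \<in> carrier G \<Longrightarrow> ring_prod (S h) (S (inv h)) \<subseteq> S \<one>"
  using ring_prod_components[of h "inv h"] by simp

lemma additive_subgroup_ring_prod_inv: "h \<in> carrier G \<Longrightarrow> additive_subgroup (ring_prod (S h) (S (inv h)))"
  by (simp add: additive_subgroup_ring_prod additive_subgroup_component)

lemma ring_prod_inv_mult_closed:
  assumes "h \<in> carrier G" "u \<in> ring_prod (S h) (S (inv h))" "v \<in> ring_prod (S h) (S (inv h))"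
  shows "u * v \<in> ring_prod (S h) (S (inv h))"
  using assms ring_prod_inv_subset_one mult_one_component(2)[of "inv h"]
  by (intro mult_right_mem_ring_prod) auto

lemma ring_prod_inv_diff_mult:
  assumes "h \<in> carrier G" "u \<in> ring_prod (S h) (S (inv h))" "x \<in> ring_prod (S h) (S (inv h))"
  shows "x - u * x \<in> ring_prod (S h) (S (inv h))" and "x - x * u \<in> ring_prod (S h) (S (inv h))"
  using assms ring_prod_inv_mult_closed
  by (auto intro!: additive_subgroup_diff[OF additive_subgroup_ring_prod_inv])

lemma local_units_if_nearly_epsilon_strong:
  assumes nes: "nearly_epsilon_strong G S"
  shows "homogeneous_local_units G S"
  unfolding homogeneous_local_units_def
proof (intro ballI conjI)
  fix h s assume h: "h \<in> carrier G" and s: "s \<in> S h"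
  have hi: "inv h \<in> carrier G" using h by simp
  have unit: "(\<exists>u\<in>ring_prod (S k) (S (inv k)). u * x = x) \<and> (\<exists>u\<in>ring_prod (S k) (S (inv k)). x * u = x)"
    if "k \<in> carrier G" "x \<in> ring_prod (S k) (S (inv k))" for k x
    using nes that by (simp add: nearly_epsilon_strong_def s_unital_iff)
  have eq: "ring_prod (ring_prod (S h) (S (inv h))) (S h) = S h"
    using nes h by (simp add: nearly_epsilon_strong_def)
  show "\<exists>e\<in>ring_prod (S h) (S (inv h)). e * s = s"
  proof (rule left_unit_ring_prod)
    show "s \<in> ring_prod (ring_prod (S h) (S (inv h))) (S h)" using eq s by simp
  qed (use h unit ring_prod_inv_diff_mult(1) in
       \<open>simp_all add: additive_subgroup_ring_prod_inv ring_prod_inv_mult_closed\<close>)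
  have "s \<in> ring_prod (S h) (ring_prod (S (inv h)) (S (inv (inv h))))"
    using eq s ring_prod_assoc_subset[of "S (inv h)" "S h" "S h"] h
    by (auto simp: additive_subgroup_component)
  then have "\<exists>e\<in>ring_prod (S (inv h)) (S (inv (inv h))). s * e = s"
    by (rule right_unit_ring_prod[rotated 4])
      (use hi unit ring_prod_inv_diff_mult(2) in
       \<open>simp_all add: additive_subgroup_ring_prod_inv ring_prod_inv_mult_closed\<close>)
  then show "\<exists>e\<in>ring_prod (S (inv h)) (S h). s * e = s" using h by simp
qed

lemma nearly_epsilon_strong_if_local_units:
  assumes units: "homogeneous_local_units G S"
  shows "nearly_epsilon_strong G S"
  unfolding nearly_epsilon_strong_def
proof (intro conjI ballI graded_ring)
  fix h assume h: "h \<in> carrier G"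
  have hi: "inv h \<in> carrier G" using h by simp
  show "ring_prod (ring_prod (S h) (S (inv h))) (S h) = S h"
  proof
    show "ring_prod (ring_prod (S h) (S (inv h))) (S h) \<subseteq> S h"
      using h ring_prod_inv_subset_one mult_one_component(1)
      by (intro ring_prod_subset additive_subgroup_component) blast+
    show "S h \<subseteq> ring_prod (ring_prod (S h) (S (inv h))) (S h)"
    proof
      fix s assume "s \<in> S h"
      then obtain e where "e \<in> ring_prod (S h) (S (inv h))" "e * s = s"
        using units h unfolding homogeneous_local_units_def by blast
      then show "s \<in> ring_prod (ring_prod (S h) (S (inv h))) (S h)"
        using \<open>s \<in> S h\<close> mult_mem_ring_prod by metis
    qed
  qed
  show "s_unital (ring_prod (S h) (S (inv h)))"
    unfolding s_unital_iff
  proof (intro ballI conjI)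
    fix x assume x: "x \<in> ring_prod (S h) (S (inv h))"
    show "\<exists>u\<in>ring_prod (S h) (S (inv h)). u * x = x"
    proof (rule left_unit_ring_prod[OF _ _ _ _ x])
      show "\<exists>u\<in>ring_prod (S h) (S (inv h)). u * y = y" if "y \<in> S h" for y
        using units h that unfolding homogeneous_local_units_def by blast
      show "y - u * y \<in> S h" if "u \<in> ring_prod (S h) (S (inv h))" "y \<in> S h" for u y
        using that h ring_prod_inv_subset_one[OF h] mult_one_component(1)[OF h]
        by (intro additive_subgroup_diff additive_subgroup_component) blast+
    qed (simp_all add: h additive_subgroup_ring_prod_inv ring_prod_inv_mult_closed)
    show "\<exists>u\<in>ring_prod (S h) (S (inv h)). x * u = x"
    proof (rule right_unit_ring_prod[OF _ _ _ _ x])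
      show "\<exists>u\<in>ring_prod (S h) (S (inv h)). y * u = y" if "y \<in> S (inv h)" for y
        using units hi that h unfolding homogeneous_local_units_def by fastforce
      show "y - y * u \<in> S (inv h)" if "u \<in> ring_prod (S h) (S (inv h))" "y \<in> S (inv h)" for u y
        using that hi ring_prod_inv_subset_one[OF h] mult_one_component(2)[OF hi]
        by (intro additive_subgroup_diff additive_subgroup_component) blast+
    qed (simp_all add: h additive_subgroup_ring_prod_inv ring_prod_inv_mult_closed)
  qed
qed

lemma component_subset_induced_grading: "g \<in> C \<Longrightarrow> S g \<subseteq> induced_grading S C"
  unfolding induced_grading_def by (auto intro!: exI[of _ "{g}"])

lemma additive_subgroup_induced_grading:
  assumes C: "C \<subseteq> carrier G"
  shows "additive_subgroup (induced_grading S C)"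
  unfolding additive_subgroup_def
proof (intro conjI ballI)
  show "0 \<in> induced_grading S C"
    unfolding induced_grading_def by (intro CollectI exI[of _ "{}"]) auto
next
  fix x assume "x \<in> induced_grading S C"
  then obtain F f where "finite F" "F \<subseteq> C" "\<forall>g\<in>F. f g \<in> S g" "x = sum f F"
    unfolding induced_grading_def by blast
  then show "- x \<in> induced_grading S C"
    unfolding induced_grading_def using C
    by (intro CollectI exI[of _ F] exI[of _ "\<lambda>g. - f g"])
      (auto simp: sum_negf intro!: additive_subgroup_uminus additive_subgroup_component)
next
  fix x y assume "x \<in> induced_grading S C" "y \<in> induced_grading S C"
  then obtain F f F' f'
    where x: "finite F" "F \<subseteq> C" "\<forall>g\<in>F. f g \<in> S g" "x = sum f F"
      and y: "finite F'" "F' \<subseteq> C" "\<forall>g\<in>F'. f' g \<in> S g" "y = sum f' F'"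
    unfolding induced_grading_def by blast
  define e where "e g = (if g \<in> F then f g else 0) + (if g \<in> F' then f' g else 0)" for g
  have "sum e (F \<union> F') = x + y"
    unfolding e_def using x y
    by (simp add: sum.distrib Int_absorb1 flip: sum.inter_restrict)
  moreover have "e g \<in> S g" if "g \<in> F \<union> F'" for g
    using that x(2,3) y(2,3) C additive_subgroup_component[of g] unfolding e_def
    by (intro additive_subgroup_add) (auto simp: additive_subgroup_zero)
  ultimately show "x + y \<in> induced_grading S C"
    unfolding induced_grading_def using x(1,2) y(1,2)
    by (intro CollectI exI[of _ "F \<union> F'"] exI[of _ e]) auto
qed

lemma mult_induced_grading:
  assumes C: "C \<subseteq> carrier G" and D: "D \<subseteq> carrier G"
    and x: "x \<in> induced_grading S C" and y: "y \<in> induced_grading S D"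
  shows "x * y \<in> induced_grading S (C <#> D)"
proof -
  obtain F f where F: "finite F" "F \<subseteq> C" "\<forall>g\<in>F. f g \<in> S g" "x = sum f F"
    using x unfolding induced_grading_def by blast
  obtain F' f' where F': "finite F'" "F' \<subseteq> D" "\<forall>h\<in>F'. f' h \<in> S h" "y = sum f' F'"
    using y unfolding induced_grading_def by blast
  have CD: "C <#> D \<subseteq> carrier G" using C D by (rule set_mult_closed)
  have "f g * f' h \<in> induced_grading S (C <#> D)" if "g \<in> F" "h \<in> F'" for g h
  proof -
    have "g \<otimes> h \<in> C <#> D" and "f g * f' h \<in> S (g \<otimes> h)"
      using that F F' C D by (auto simp: set_mult_def intro!: mult_components bexI)
    then show ?thesis using component_subset_induced_grading by blast
  qed
  then have "(\<Sum>g\<in>F. \<Sum>h\<in>F'. f g * f' h) \<in> induced_grading S (C <#> D)"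
    by (intro additive_subgroup_sum[OF additive_subgroup_induced_grading[OF CD]])
  then show ?thesis using F(4) F'(4) by (simp add: sum_product)
qed

lemma mult_one_component_induced_grading:
  assumes "C \<subseteq> carrier G" "x \<in> induced_grading S C" "u \<in> S \<one>"
  shows "u * x \<in> induced_grading S C" and "x * u \<in> induced_grading S C"
proof -
  obtain F f where F: "finite F" "F \<subseteq> C" "\<forall>g\<in>F. f g \<in> S g" "x = sum f F"
    using assms(2) unfolding induced_grading_def by blast
  then show "u * x \<in> induced_grading S C"
    unfolding induced_grading_def using assms(1,3)
    by (intro CollectI exI[of _ F] exI[of _ "\<lambda>g. u * f g"])
      (auto simp: sum_distrib_left intro: mult_one_component)
  show "x * u \<in> induced_grading S C"
    unfolding induced_grading_def using F assms(1,3)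
    by (intro CollectI exI[of _ F] exI[of _ "\<lambda>g. f g * u"])
      (auto simp: sum_distrib_right intro: mult_one_component)
qed

lemma ex_decomposition_induced_grading:
  assumes "C \<subseteq> carrier G" "y \<in> induced_grading S C"
  shows "\<exists>f. decomposition G S y f \<and> {g. f g \<noteq> 0} \<subseteq> C"
proof -
  obtain F e where F: "finite F" "F \<subseteq> C" "\<forall>g\<in>F. e g \<in> S g" "y = sum e F"
    using assms(2) unfolding induced_grading_def by blast
  define f where "f g = (if g \<in> F then e g else 0)" for g
  have supp: "{g. f g \<noteq> 0} \<subseteq> F" by (auto simp: f_def)
  have "sum f {g. f g \<noteq> 0} = sum f F"
    using F(1) supp by (intro sum.mono_neutral_left) auto
  then have "y = (\<Sum>g | f g \<noteq> 0. f g)" by (simp add: F(4) f_def)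
  then show ?thesis
    unfolding decomposition_def using F assms(1) supp finite_subset[OF supp]
    by (intro exI[of _ f]) (auto simp: f_def additive_subgroup_zero additive_subgroup_component)
qed

lemma decomposition_coset_sum:
  assumes N: "subgroup N G" and f: "decomposition G S x f"
  shows "decomposition (G Mod N) (induced_grading S) x (coset_sum G N f)"
proof -
  have supp: "{g. f g \<noteq> 0} \<subseteq> carrier G" and fin: "finite {g. f g \<noteq> 0}"
    using f by (auto simp: decomposition_def)
  have "coset_sum G N f C = 0" if "C \<notin> carrier (G Mod N)" for C
  proof -
    have empty: "{g. f g \<noteq> 0 \<and> N #> g = C} = {}"
      using that supp by (auto simp: carrier_FactGroup)
    show ?thesis unfolding coset_sum_def empty by simp
  qed
  moreover have "coset_sum G N f C \<in> induced_grading S C" for C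
  proof -
    have "{g. f g \<noteq> 0 \<and> N #> g = C} \<subseteq> C"
      using supp rcos_self[OF _ N] by blast
    then show ?thesis
      unfolding coset_sum_def induced_grading_def using f fin
      by (intro CollectI exI[of _ "{g. f g \<noteq> 0 \<and> N #> g = C}"] exI[of _ f])
        (auto simp: decomposition_def)
  qed
  moreover have "finite {C. coset_sum G N f C \<noteq> 0}"
    using finite_subset[OF coset_sum_support finite_imageI[OF fin]] .
  ultimately show ?thesis
    using f sum_coset_sum[OF fin, where G = G and N = N] by (simp add: decomposition_def)
qed

lemma decomposition_refines:
  assumes N: "subgroup N G" and F: "decomposition (G Mod N) (induced_grading S) x F"
  shows "\<exists>f. decomposition G S x f \<and> coset_sum G N f = F"
proof -
  have "\<exists>e. decomposition G S (F C) e \<and> {g. e g \<noteq> 0} \<subseteq> C" if "C \<in> carrier (G Mod N)" for C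
    using F that FactGroup_carrier_subset[OF N that]
    by (intro ex_decomposition_induced_grading) (auto simp: decomposition_def)
  then obtain e where e: "\<And>C. C \<in> carrier (G Mod N) \<Longrightarrow> decomposition G S (F C) (e C) \<and> {g. e C g \<noteq> 0} \<subseteq> C"
    by metis
  \<comment> \<open>the guard \<open>F (N #> g) \<noteq> 0\<close> keeps the support finite: \<open>e C\<close> need not vanish when \<open>F C = 0\<close>\<close>
  define f where "f g = (if g \<in> carrier G \<and> F (N #> g) \<noteq> 0 then e (N #> g) g else 0)" for g
  have "coset_sum G N f C = F C" for C
  proof (cases "C \<in> carrier (G Mod N) \<and> F C \<noteq> 0")
    case True
    then have "{g. f g \<noteq> 0 \<and> N #> g = C} = {g. e C g \<noteq> 0}"
      using e[of C] FactGroup_repr[OF N, of C] FactGroup_carrier_subset[OF N, of C] by (auto simp: f_def)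
    moreover have "f g = e C g" if "e C g \<noteq> 0" for g
      using that True e[of C] FactGroup_repr[OF N, of C] FactGroup_carrier_subset[OF N, of C] by (auto simp: f_def)
    ultimately show ?thesis
      using e[of C] True by (simp add: coset_sum_def decomposition_def)
  next
    case False
    then have empty: "{g. f g \<noteq> 0 \<and> N #> g = C} = {}"
      using r_coset_mem_FactGroup by (auto simp: f_def)
    have "F C = 0" using False F by (auto simp: decomposition_def)
    then show ?thesis unfolding coset_sum_def empty by simp
  qed
  then have coset_sum_f: "coset_sum G N f = F" ..
  have "{g. f g \<noteq> 0} \<subseteq> (\<Union>C\<in>{C. F C \<noteq> 0}. {g. e C g \<noteq> 0})"
    by (auto simp: f_def)
  then have fin: "finite {g. f g \<noteq> 0}"
    using F e r_coset_mem_FactGroup by (elim finite_subset) (auto simp: decomposition_def)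
  have "x = (\<Sum>g | f g \<noteq> 0. f g)"
    using F sum_coset_sum[OF fin, where G = G and N = N] by (simp add: coset_sum_f decomposition_def)
  moreover have "f g \<in> S g" if "g \<in> carrier G" for g
    using that e r_coset_mem_FactGroup by (auto simp: f_def decomposition_def additive_subgroup_zero additive_subgroup_component)
  ultimately have "decomposition G S x f"
    using fin by (auto simp: decomposition_def f_def)
  then show ?thesis using coset_sum_f by blast
qed

lemma graded_ring_FactGroup:
  assumes N: "subgroup N G"
  shows "graded_ring (G Mod N) (induced_grading S)"
  unfolding graded_ring_iff_decomposition
proof (intro conjI ballI allI)
  fix C assume C: "C \<in> carrier (G Mod N)"
  show "additive_subgroup (induced_grading S C)"
    using FactGroup_carrier_subset[OF N C] by (rule additive_subgroup_induced_grading)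
  fix D assume D: "D \<in> carrier (G Mod N)"
  note CD = FactGroup_carrier_subset[OF N C] FactGroup_carrier_subset[OF N D]
  show "ring_prod (induced_grading S C) (induced_grading S D) \<subseteq> induced_grading S (C \<otimes>\<^bsub>G Mod N\<^esub> D)"
    by (simp, intro ring_prod_subset additive_subgroup_induced_grading set_mult_closed CD
      mult_induced_grading[OF CD])
next
  fix x
  obtain f where "decomposition G S x f" using ex1_decomposition by blast
  then have "decomposition (G Mod N) (induced_grading S) x (coset_sum G N f)"
    by (rule decomposition_coset_sum[OF N])
  moreover have "F = F'"
    if "decomposition (G Mod N) (induced_grading S) x F" "decomposition (G Mod N) (induced_grading S) x F'"
    for F F'
    using decomposition_refines[OF N that(1)] decomposition_refines[OF N that(2)] ex1_decomposition
    by metis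
  ultimately show "\<exists>!F. decomposition (G Mod N) (induced_grading S) x F" by blast
qed

lemma induced_grading_left_unit:
  assumes units: "homogeneous_local_units G S" and C: "C \<subseteq> carrier G"
    and x: "x \<in> induced_grading S C"
  shows "\<exists>u\<in>ring_prod (induced_grading S C) (induced_grading S (set_inv C)). u * x = x"
proof -
  let ?J = "ring_prod (induced_grading S C) (induced_grading S (set_inv C))"
  obtain F f where F: "finite F" "F \<subseteq> C" "\<forall>g\<in>F. f g \<in> S g" "x = sum f F"
    using x unfolding induced_grading_def by blast
  \<comment> \<open>the common unit is taken in \<open>S \<one>\<close>, so that it acts on each homogeneous component\<close>
  have "\<exists>u\<in>?J \<inter> S \<one>. \<forall>y\<in>f ` F. u * y = y"
  proof (rule common_left_unit)
    show "additive_subgroup (?J \<inter> S \<one>)"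
      using C by (intro additive_subgroup_Int additive_subgroup_ring_prod additive_subgroup_induced_grading
          set_inv_subset_carrier additive_subgroup_component) auto
    show "u * v \<in> ?J \<inter> S \<one>" if "u \<in> ?J \<inter> S \<one>" "v \<in> ?J \<inter> S \<one>" for u v
      using that mult_components[of \<one> \<one> u v]
        mult_one_component_induced_grading(2)[OF set_inv_subset_carrier[OF C]]
      by (auto intro: mult_right_mem_ring_prod)
    show "y - u * y \<in> (\<Union>h\<in>C. S h)" if "u \<in> ?J \<inter> S \<one>" "y \<in> (\<Union>h\<in>C. S h)" for u y
      using that C mult_one_component(1)
      by (blast intro: additive_subgroup_diff additive_subgroup_component)
    show "\<exists>u\<in>?J \<inter> S \<one>. u * y = y" if y: "y \<in> (\<Union>h\<in>C. S h)" for y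
    proof -
      obtain h where h: "h \<in> C" "y \<in> S h" using y by blast
      then obtain e where e: "e \<in> ring_prod (S h) (S (inv h))" "e * y = y"
        using units C unfolding homogeneous_local_units_def by blast
      have "ring_prod (S h) (S (inv h)) \<subseteq> ?J"
        using h by (intro ring_prod_mono component_subset_induced_grading inv_mem_set_inv)
      then show ?thesis using e h C ring_prod_inv_subset_one by blast
    qed
  qed (use F in auto)
  then obtain u where u: "u \<in> ?J" "\<forall>g\<in>F. u * f g = f g" by blast
  have "u * x = x" using u(2) F(4) by (simp add: sum_distrib_left)
  with u(1) show ?thesis by blast
qed

lemma induced_grading_right_unit:
  assumes units: "homogeneous_local_units G S" and C: "C \<subseteq> carrier G"
    and x: "x \<in> induced_grading S C"
  shows "\<exists>u\<in>ring_prod (induced_grading S (set_inv C)) (induced_grading S C). x * u = x"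
proof -
  let ?J = "ring_prod (induced_grading S (set_inv C)) (induced_grading S C)"
  obtain F f where F: "finite F" "F \<subseteq> C" "\<forall>g\<in>F. f g \<in> S g" "x = sum f F"
    using x unfolding induced_grading_def by blast
  have "\<exists>u\<in>?J \<inter> S \<one>. \<forall>y\<in>f ` F. y * u = y"
  proof (rule common_right_unit)
    show "additive_subgroup (?J \<inter> S \<one>)"
      using C by (intro additive_subgroup_Int additive_subgroup_ring_prod additive_subgroup_induced_grading
          additive_subgroup_component) auto
    show "u * v \<in> ?J \<inter> S \<one>" if "u \<in> ?J \<inter> S \<one>" "v \<in> ?J \<inter> S \<one>" for u v
      using that mult_components[of \<one> \<one> u v]
        mult_one_component_induced_grading(1)[OF set_inv_subset_carrier[OF C]]
      by (auto intro: mult_left_mem_ring_prod)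
    show "y - y * u \<in> (\<Union>h\<in>C. S h)" if "u \<in> ?J \<inter> S \<one>" "y \<in> (\<Union>h\<in>C. S h)" for u y
      using that C mult_one_component(2)
      by (blast intro: additive_subgroup_diff additive_subgroup_component)
    show "\<exists>u\<in>?J \<inter> S \<one>. y * u = y" if y: "y \<in> (\<Union>h\<in>C. S h)" for y
    proof -
      obtain h where h: "h \<in> C" "y \<in> S h" using y by blast
      then obtain e where e: "e \<in> ring_prod (S (inv h)) (S h)" "y * e = y"
        using units C unfolding homogeneous_local_units_def by blast
      have "ring_prod (S (inv h)) (S h) \<subseteq> ?J"
        using h by (intro ring_prod_mono component_subset_induced_grading inv_mem_set_inv)
      moreover have "ring_prod (S (inv h)) (S h) \<subseteq> S \<one>"
        using h C ring_prod_components[of "inv h" h] by auto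
      ultimately show ?thesis using e by blast
    qed
  qed (use F in auto)
  then obtain u where u: "u \<in> ?J" "\<forall>g\<in>F. f g * u = f g" by blast
  have "x * u = x" using u(2) F(4) by (simp add: sum_distrib_right)
  with u(1) show ?thesis by blast
qed

lemma local_units_FactGroup:
  assumes N: "N \<lhd> G" and units: "homogeneous_local_units G S"
  shows "homogeneous_local_units (G Mod N) (induced_grading S)"
  unfolding homogeneous_local_units_def
proof (intro ballI conjI)
  fix C s assume C: "C \<in> carrier (G Mod N)" and s: "s \<in> induced_grading S C"
  have inv: "inv\<^bsub>G Mod N\<^esub> C = set_inv C" using normal.inv_FactGroup[OF N C] .
  have "C \<subseteq> carrier G" using FactGroup_carrier_subset[OF normal_imp_subgroup[OF N] C] .
  then show "\<exists>e\<in>ring_prod (induced_grading S C) (induced_grading S (inv\<^bsub>G Mod N\<^esub> C)). e * s = s"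
    and "\<exists>e\<in>ring_prod (induced_grading S (inv\<^bsub>G Mod N\<^esub> C)) (induced_grading S C). s * e = s"
    unfolding inv using induced_grading_left_unit induced_grading_right_unit units s by blast+
qed

end

theorem proposition5p8:
  fixes G :: "('g, 'b) monoid_scheme" and N :: "'g set" and S :: "'g \<Rightarrow> 'a::ring set"
  assumes "group G" and "N \<lhd> G" and "nearly_epsilon_strong G S"
  shows "nearly_epsilon_strong (G Mod N) (induced_grading S)"
proof -
  have "graded_ring G S" using assms(3) by (simp add: nearly_epsilon_strong_def)
  with assms(1) interpret group_grading G S
    by (intro group_grading.intro group_grading_axioms.intro)
  interpret FactGroup: group_grading "G Mod N" "induced_grading S"
    using normal.factorgroup_is_group[OF assms(2)] graded_ring_FactGroup[OF normal_imp_subgroup[OF assms(2)]]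
    by (intro group_grading.intro group_grading_axioms.intro)
  show ?thesis
    using FactGroup.nearly_epsilon_strong_if_local_units local_units_FactGroup[OF assms(2)]
      local_units_if_nearly_epsilon_strong[OF assms(3)] by blast
qed

end
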